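(* Let $M\in\mathbb{R}^{p\times q}_+$ be a nonnegative matrix whose entries sum to $1$, and let $k\ge1$. The following are equivalent: (i) there exist $A_1,\dots,A_p,B_1,\dots,B_q\in\mathcal{S}^k_+$ with $M_{ij}=\langle A_i,B_j\rangle$ for all $i,j$; (ii) there exist $F_1,\dots,F_p\in\mathcal{S}^k_+$ with $\sum_{i=1}^pF_i=I_k$, $G_1,\dots,G_q\in\mathcal{S}^k_+$ with $\sum_{j=1}^qG_j=I_k$, and $\rho\in\mathcal{S}^{k^2}_+$ with $\operatorname{trace}(\rho)=1$, such that \[ M_{ij}=\operatorname{trace}\big((F_i\otimes G_j)\rho\big)\quad\text{for all } i=1,\dots,p,\ j=1,\dots,q, \] where $\otimes$ denotes the Kronecker product.
   Context: $\mathcal{S}^k_+$ denotes the cone of $k\times k$ real symmetric positive semidefinite matrices, $\langle A,B\rangle=\operatorname{trace}(AB)$, and $I_k$ is the $k\times k$ identity matrix. *)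

theory Defs
  imports "HOL-Analysis.Analysis"
begin

definition psd :: "real^'n^'n \<Rightarrow> bool" where
  "psd A \<longleftrightarrow> transpose A = A \<and> (\<forall>x::real^'n. 0 \<le> x \<bullet> (A *v x))"

definition frob_inner :: "real^'n^'n \<Rightarrow> real^'n^'n \<Rightarrow> real" where
  "frob_inner A B = trace (A ** B)"

text \<open>Kronecker product; rows/columns of the k^2 x k^2 result are indexed by pairs,
  ordered lexicographically: (F \<otimes> G)_{(i,i'),(j,j')} = F_{ij} G_{i'j'}.\<close>
definition kron :: "real^'n^'n \<Rightarrow> real^'m^'m \<Rightarrow> real^('n \<times> 'm)^('n \<times> 'm)" where
  "kron F G = (\<chi> r c. F $ fst r $ fst c * G $ snd r $ snd c)"

end

theory Submission
  imports Defs
begin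

text \<open>
  Everything is reduced to one identity: for a k x k matrix X with rank-one
  "vectorization" rho = vec X (vec X)^T one has trace ((F \<otimes> G) rho) = trace (X^T F X G^T).
  (ii) \<Longrightarrow> (i): a psd rho is a sum of such rank-one matrices (Gram factorization), so
  trace ((F_i \<otimes> G_j) rho) = <A_i, G_j> with A_i = \<Sum>_l X_l^T F_i X_l psd.
  (i) \<Longrightarrow> (ii): every psd family A_i can be normalized as A_i = R F_i R^T with psd F_i
  summing to the identity (using a factorization \<Sum>_i A_i = L D L^T, L invertible,
  D a 0/1 diagonal matrix); then <A_i, B_j> = trace ((F_i \<otimes> G_j) rho) for the rank-one
  rho built from X = R_A^T R_B, and trace rho = \<Sum> M = 1 because the F_i and G_j
  sum to the identity.
\<close>

section \<open>Positive semidefinite matrices in coordinates\<close>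

lemma quad_form_expand:
  "x \<bullet> (A *v x) = (\<Sum>i\<in>UNIV. \<Sum>j\<in>UNIV. x$i * A$i$j * x$j)"
  by (simp add: inner_vec_def matrix_vector_mult_def sum_distrib_left mult.assoc)

lemma psd_sym: "psd A \<Longrightarrow> A$j$i = A$i$j"
  unfolding psd_def by (metis transpose_def vec_lambda_beta)

lemma psd_quad: "psd A \<Longrightarrow> 0 \<le> (\<Sum>i\<in>UNIV. \<Sum>j\<in>UNIV. x$i * A$i$j * x$j)"
  unfolding psd_def quad_form_expand[symmetric] by blast

lemma psdI:
  assumes "\<And>i j. A$j$i = A$i$j" "\<And>x. 0 \<le> (\<Sum>i\<in>UNIV. \<Sum>j\<in>UNIV. x$i * A$i$j * x$j)"
  shows "psd A"
  unfolding psd_def quad_form_expand using assms by (auto simp: transpose_def vec_eq_iff)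

lemma psd_zero: "psd (0::real^'n^'n)"
  unfolding psd_def by (simp add: transpose_def vec_eq_iff)

lemma psd_add: "psd A \<Longrightarrow> psd B \<Longrightarrow> psd (A + B)"
  unfolding psd_def
  by (simp add: transpose_def vec_eq_iff matrix_vector_mult_add_rdistrib inner_add_right)

lemma psd_sum: "finite S \<Longrightarrow> (\<And>i. i \<in> S \<Longrightarrow> psd (f i)) \<Longrightarrow> psd (sum f S)"
  by (induction S rule: finite_induct) (auto simp: psd_zero psd_add)

lemma psd_congruence:
  fixes A :: "real^'n^'n" and T :: "real^'n^'m"
  assumes "psd A"
  shows "psd (T ** A ** transpose T)"
  unfolding psd_def
proof (intro conjI allI)
  show "transpose (T ** A ** transpose T) = T ** A ** transpose T"
    using assms unfolding psd_def by (simp add: matrix_transpose_mul matrix_mul_assoc)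
next
  fix x :: "real^'m"
  have "x \<bullet> ((T ** A ** transpose T) *v x) = (transpose T *v x) \<bullet> (A *v (transpose T *v x))"
    by (simp add: matrix_vector_mul_assoc[symmetric] dot_lmul_matrix[symmetric])
  also have "\<dots> \<ge> 0" using assms unfolding psd_def by simp
  finally show "0 \<le> x \<bullet> ((T ** A ** transpose T) *v x)" .
qed

lemma sum_delta_left: "(\<Sum>i\<in>UNIV. (if i = a then s else 0) * f i) = s * (f (a::'a::finite)::real)"
  by (subst sum.cong[OF refl, of _ _ "\<lambda>i. if i = a then s * f a else 0"]) auto

lemma sum_delta_right: "(\<Sum>i\<in>UNIV. f i * (if i = a then s else 0)) = (f (a::'a::finite)::real) * s"
  by (subst sum.cong[OF refl, of _ _ "\<lambda>i. if i = a then f a * s else 0"]) auto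

lemma quad_form_two_coords:
  "(\<Sum>i\<in>UNIV. \<Sum>j\<in>UNIV. ((if i = a then s else 0) + (if i = b then t else 0)) * (A::real^'n^'n)$i$j
      * ((if j = a then s else 0) + (if j = b then t else 0)))
   = s * s * A$a$a + s * t * A$a$b + t * s * A$b$a + t * t * A$b$b"
  by (simp only: distrib_left distrib_right sum.distrib sum_delta_left sum_delta_right mult.assoc
      sum_distrib_left[symmetric]) (simp add: algebra_simps)

lemma quad_form_shift:
  "(\<Sum>i\<in>UNIV. \<Sum>j\<in>UNIV. (x$i + (if i = c then t else 0)) * (A::real^'n^'n)$i$j * (x$j + (if j = c then t else 0)))
   = (\<Sum>i\<in>UNIV. \<Sum>j\<in>UNIV. x$i * A$i$j * x$j) + t * (\<Sum>i\<in>UNIV. x$i * A$i$c)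
     + t * (\<Sum>j\<in>UNIV. A$c$j * x$j) + t * t * A$c$c"
  by (simp only: distrib_left distrib_right sum.distrib sum_delta_left sum_delta_right mult.assoc
      sum_distrib_left[symmetric]) (simp add: algebra_simps sum_distrib_left)

lemma psd_two_coords:
  assumes "psd A"
  shows "0 \<le> s * s * A$a$a + s * t * A$a$b + t * s * A$b$a + t * t * A$b$b"
proof -
  let ?x = "\<chi> i. (if i = a then s else 0) + (if i = b then t else 0)"
  have "0 \<le> (\<Sum>i\<in>UNIV. \<Sum>j\<in>UNIV. ?x$i * A$i$j * ?x$j)"
    by (rule psd_quad[OF assms])
  then show ?thesis by (simp only: vec_lambda_beta quad_form_two_coords)
qed

lemma psd_diag_nonneg: "psd A \<Longrightarrow> 0 \<le> A$a$a"
  using psd_two_coords[of A 1 a 0 a] by simp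

lemma psd_diag_zero:
  assumes "psd A" "A$a$a = 0"
  shows "A$a$b = 0" "A$b$a = 0"
proof -
  have sym: "A$b$a = A$a$b" using psd_sym[OF assms(1)] .
  show "A$a$b = 0"
  proof (rule ccontr)
    assume ne: "A$a$b \<noteq> 0"
    define t where "t = - (A$b$b + 1) / (2 * A$a$b)"
    have "0 \<le> t * t * A$a$a + t * 1 * A$a$b + 1 * t * A$b$a + 1 * 1 * A$b$b"
      by (rule psd_two_coords[OF assms(1)])
    also have "\<dots> = 2*t*A$a$b + A$b$b" using assms(2) sym by simp
    also have "\<dots> = -1" using ne by (simp add: t_def field_simps)
    finally show False by simp
  qed
  then show "A$b$a = 0" using sym by simp
qed

lemma psd_schur_complement:
  fixes A :: "real^'n^'n"
  assumes psd: "psd A" and pos: "A$c$c > 0"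
  shows "psd (\<chi> a b. A$a$b - A$a$c * A$b$c / A$c$c)"
proof (rule psdI)
  fix i j
  show "(\<chi> a b. A$a$b - A$a$c * A$b$c / A$c$c)$j$i = (\<chi> a b. A$a$b - A$a$c * A$b$c / A$c$c)$i$j"
    using psd_sym[OF psd] by (simp add: mult.commute)
next
  fix x :: "real^'n"
  define p where "p = (\<Sum>j\<in>UNIV. A$c$j * x$j)"
  have p_sym: "(\<Sum>i\<in>UNIV. x$i * A$i$c) = p"
    unfolding p_def using psd_sym[OF psd] by (metis (no_types, lifting) mult.commute sum.cong)
  define t where "t = - p / A$c$c"
  have "0 \<le> (\<Sum>i\<in>UNIV. \<Sum>j\<in>UNIV. (\<chi> i. x$i + (if i = c then t else 0))$i * A$i$j
                                      * (\<chi> i. x$i + (if i = c then t else 0))$j)"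
    by (rule psd_quad[OF psd])
  also have "\<dots> = (\<Sum>i\<in>UNIV. \<Sum>j\<in>UNIV. x$i * A$i$j * x$j) + t * p + t * p + t * t * A$c$c"
    by (simp only: vec_lambda_beta quad_form_shift p_sym p_def)
  also have "\<dots> = (\<Sum>i\<in>UNIV. \<Sum>j\<in>UNIV. x$i * A$i$j * x$j) - p * p / A$c$c"
    using pos by (simp add: t_def field_simps)
  also have "\<dots> = (\<Sum>i\<in>UNIV. \<Sum>j\<in>UNIV. x$i * (\<chi> a b. A$a$b - A$a$c * A$b$c / A$c$c)$i$j * x$j)"
  proof -
    have "(\<Sum>i\<in>UNIV. \<Sum>j\<in>UNIV. x$i * (\<chi> a b. A$a$b - A$a$c * A$b$c / A$c$c)$i$j * x$j)
       = (\<Sum>i\<in>UNIV. \<Sum>j\<in>UNIV. x$i * A$i$j * x$j)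
         - (\<Sum>i\<in>UNIV. \<Sum>j\<in>UNIV. (x$i * A$i$c) * (A$j$c * x$j)) / A$c$c"
      by (simp add: algebra_simps sum_subtractf sum_divide_distrib)
    also have "(\<Sum>i\<in>UNIV. \<Sum>j\<in>UNIV. (x$i * A$i$c) * (A$j$c * x$j)) = p * p"
      using p_sym psd_sym[OF psd] by (simp add: sum_product[symmetric] p_def)
    finally show ?thesis by simp
  qed
  finally show "0 \<le> (\<Sum>i\<in>UNIV. \<Sum>j\<in>UNIV. x$i * (\<chi> a b. A$a$b - A$a$c * A$b$c / A$c$c)$i$j * x$j)" .
qed

lemma psd_pivot_split:
  fixes A :: "real^'n^'n"
  assumes psd: "psd A" and pos: "A$c$c > 0"
  obtains A' u where "psd A'" "\<And>a b. A$a$b = A'$a$b + u$a * u$b"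
    "\<And>b. A'$c$b = 0" "\<And>b. A'$b$c = 0" "u$c > 0" "\<And>a. A$a$c = 0 \<Longrightarrow> u$a = 0"
proof
  define s where "s = sqrt (A$c$c)"
  have s_pos: "s > 0" and ss: "s * s = A$c$c" using pos by (simp_all add: s_def)
  show "psd (\<chi> a b. A$a$b - A$a$c * A$b$c / A$c$c)" by (rule psd_schur_complement[OF psd pos])
  show "A$a$b = (\<chi> a b. A$a$b - A$a$c * A$b$c / A$c$c)$a$b + (\<chi> a. A$a$c / s)$a * (\<chi> a. A$a$c / s)$b"
    for a b using s_pos by (simp add: ss[symmetric])
  show "(\<chi> a b. A$a$b - A$a$c * A$b$c / A$c$c)$c$b = 0" for b
    using pos psd_sym[OF psd, of b c] by simp
  show "(\<chi> a b. A$a$b - A$a$c * A$b$c / A$c$c)$b$c = 0" for b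
    using pos by simp
  show "(\<chi> a. A$a$c / s)$c > 0" using pos s_pos by simp
  show "A$a$c = 0 \<Longrightarrow> (\<chi> a. A$a$c / s)$a = 0" for a by simp
qed

section \<open>The factorization A = L D L^T\<close>

definition diagm :: "('n::finite \<Rightarrow> real) \<Rightarrow> real^'n^'n" where
  "diagm d = (\<chi> a b. if a = b then d a else 0)"

lemma diagm_left: "(diagm d ** X)$a$b = d a * X$a$b"
  unfolding diagm_def matrix_matrix_mult_def
  by (simp add: if_distrib[of "\<lambda>x. x * _"] sum.delta cong: if_cong)

lemma diagm_right: "(X ** diagm d)$a$b = X$a$b * d b"
  unfolding diagm_def matrix_matrix_mult_def
  by (simp add: if_distrib[of "\<lambda>x. _ * x"] sum.delta cong: if_cong)

lemma diagm_mult: "diagm d ** diagm e = diagm (\<lambda>a. d a * e a)"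
  by (simp add: vec_eq_iff diagm_right) (simp add: diagm_def)

lemma transpose_diagm: "transpose (diagm d) = diagm d"
  by (simp add: diagm_def transpose_def vec_eq_iff)

lemma psd_diagm: "(\<And>a. 0 \<le> d a) \<Longrightarrow> psd (diagm d)"
proof (rule psdI)
  fix i j show "diagm d $ j $ i = diagm d $ i $ j" by (simp add: diagm_def)
next
  fix x :: "real^'a" assume "\<And>a. 0 \<le> d a"
  then show "0 \<le> (\<Sum>i\<in>UNIV. \<Sum>j\<in>UNIV. x$i * diagm d$i$j * x$j)"
    unfolding diagm_def by (simp add: if_distrib[of "\<lambda>y. _ * y * _"] sum.delta cong: if_cong)
      (intro sum_nonneg, simp add: mult.commute[of _ "d _"] mult.assoc)
qed

lemma diag_factor_eq_mult:
  "(\<chi> a b. \<Sum>l\<in>UNIV. d l * L$a$l * L$b$l) = L ** diagm d ** transpose L"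
proof -
  have "(L ** diagm d ** transpose L)$a$b = (\<Sum>l\<in>UNIV. d l * L$a$l * L$b$l)" for a b
    by (simp only: matrix_matrix_mult_def[of "L ** diagm d" "transpose L"] vec_lambda_beta diagm_right)
      (simp add: transpose_def mult_ac)
  then show ?thesis by (simp add: vec_eq_iff)
qed

text \<open>Invariant of the elimination on a set S of processed coordinates: A = L D L^T with D a
  0/1 diagonal supported on S, L injective and equal to the identity outside S.\<close>

definition factors_on :: "'n::finite set \<Rightarrow> real^'n^'n \<Rightarrow> real^'n^'n \<Rightarrow> ('n \<Rightarrow> real) \<Rightarrow> bool" where
  "factors_on S A L d \<longleftrightarrow>
     (\<forall>l. d l = 0 \<or> d l = 1) \<and> (\<forall>x. L *v x = 0 \<longrightarrow> x = 0) \<and>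
     (\<forall>a b. a \<notin> S \<longrightarrow> d a = 0 \<and> L$a$b = (if a = b then 1 else 0) \<and> L$b$a = (if a = b then 1 else 0)) \<and>
     (\<forall>a b. A$a$b = (\<Sum>l\<in>UNIV. d l * L$a$l * L$b$l))"

lemma factors_on_mono: "factors_on S A L d \<Longrightarrow> S \<subseteq> S' \<Longrightarrow> factors_on S' A L d"
  unfolding factors_on_def by blast

lemma factors_on_insert:
  assumes fac: "factors_on S A L d" and c: "c \<notin> S" and uc: "u$c > 0"
    and u_supp: "\<And>a. a \<notin> insert c S \<Longrightarrow> u$a = 0"
  shows "factors_on (insert c S) (\<chi> a b. A$a$b + u$a * u$b)
           (\<chi> a b. if b = c then u$a else L$a$b) (d(c := 1))"
proof -
  define L' where "L' = (\<chi> a b. if b = c then u$a else L$a$b)"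
  have d01: "\<forall>l. d l = 0 \<or> d l = 1" and inj: "\<forall>x. L *v x = 0 \<longrightarrow> x = 0"
    and outside: "\<And>a b. a \<notin> S \<Longrightarrow> d a = 0 \<and> L$a$b = (if a = b then 1 else 0) \<and> L$b$a = (if a = b then 1 else 0)"
    and A_eq: "\<And>a b. A$a$b = (\<Sum>l\<in>UNIV. d l * L$a$l * L$b$l)"
    using fac unfolding factors_on_def by blast+
  have dc: "d c = 0" and Lc: "\<And>b. L$c$b = (if c = b then 1 else 0)" using outside[OF c] by auto
  have "x = 0" if x0: "L' *v x = 0" for x
  proof -
    have "(L' *v x)$c = (\<Sum>b\<in>UNIV. L'$c$b * x$b)" by (simp add: matrix_vector_mult_def)
    also have "\<dots> = (\<Sum>b\<in>UNIV. (if b = c then u$c * x$c else 0))"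
      by (rule sum.cong) (auto simp: L'_def Lc)
    finally have "x$c = 0" using x0 uc by simp
    then have "L *v x = L' *v x"
      by (auto simp: matrix_vector_mult_def L'_def vec_eq_iff intro!: sum.cong)
    then show "x = 0" using x0 inj by simp
  qed
  moreover have "(\<chi> a b. A$a$b + u$a * u$b)$a$b = (\<Sum>l\<in>UNIV. (d(c := 1)) l * L'$a$l * L'$b$l)" for a b
  proof -
    have "(\<Sum>l\<in>UNIV. (d(c := 1)) l * L'$a$l * L'$b$l)
        = (\<Sum>l\<in>UNIV. d l * L$a$l * L$b$l + (if l = c then u$a * u$b else 0))"
      by (rule sum.cong) (auto simp: L'_def dc)
    then show ?thesis by (simp add: A_eq sum.distrib)
  qed
  moreover have "(d(c := 1)) a = 0 \<and> L'$a$b = (if a = b then 1 else 0) \<and> L'$b$a = (if a = b then 1 else 0)"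
    if "a \<notin> insert c S" for a b
    using that outside[of a b] outside[of a c] u_supp[OF that] by (auto simp: L'_def)
  moreover have "\<forall>l. (d(c := 1)) l = 0 \<or> (d(c := 1)) l = 1" using d01 by simp
  ultimately show ?thesis unfolding factors_on_def L'_def[symmetric] by blast
qed

lemma psd_factors_on:
  fixes S :: "'n::finite set"
  assumes "finite S"
  shows "psd A \<Longrightarrow> (\<forall>a b. a \<notin> S \<or> b \<notin> S \<longrightarrow> A$a$b = 0) \<Longrightarrow> \<exists>L d. factors_on S A L d"
  using assms
proof (induction S arbitrary: A rule: finite_induct)
  case empty
  have "A = 0" using empty.prems(2) by (simp add: vec_eq_iff)
  then have "factors_on {} A (mat 1) (\<lambda>_. 0)"
    unfolding factors_on_def matrix_vector_mul_lid by (auto simp: mat_def)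
  then show ?case by blast
next
  case (insert c S)
  note psd = insert.prems(1) and A_supp = insert.prems(2)
  show ?case
  proof (cases "A$c$c = 0")
    case True
    have "\<forall>a b. a \<notin> S \<or> b \<notin> S \<longrightarrow> A$a$b = 0"
    proof (intro allI impI)
      fix a b assume ab: "a \<notin> S \<or> b \<notin> S"
      show "A$a$b = 0"
      proof (cases "a = c \<or> b = c")
        case True
        then show ?thesis using psd_diag_zero[OF psd \<open>A$c$c = 0\<close>] by auto
      next
        case False
        then have "a \<notin> insert c S \<or> b \<notin> insert c S" using ab by simp
        then show ?thesis using A_supp by blast
      qed
    qed
    then obtain L d where "factors_on S A L d" using insert.IH[OF psd] by blast
    then have "factors_on (insert c S) A L d" by (rule factors_on_mono) blast
    then show ?thesis by blast
  next
    case False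
    then have pos: "A$c$c > 0" using psd_diag_nonneg[OF psd, of c] by simp
    obtain A' u where A'psd: "psd A'" and A_eq: "\<And>a b. A$a$b = A'$a$b + u$a * u$b"
      and A'c: "\<And>b. A'$c$b = 0" "\<And>b. A'$b$c = 0" and uc: "u$c > 0"
      and u0: "\<And>a. A$a$c = 0 \<Longrightarrow> u$a = 0"
      using psd_pivot_split[OF psd pos] by blast
    have u_supp: "u$a = 0" if "a \<notin> insert c S" for a using u0 A_supp that by simp
    have "\<forall>a b. a \<notin> S \<or> b \<notin> S \<longrightarrow> A'$a$b = 0"
    proof (intro allI impI)
      fix a b assume ab: "a \<notin> S \<or> b \<notin> S"
      consider "a = c" | "b = c" | "a \<notin> insert c S" | "b \<notin> insert c S" using ab by blast
      then show "A'$a$b = 0"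
      proof cases
        case 3
        then show ?thesis using A_eq[of a b] A_supp u_supp[OF 3] by simp
      next
        case 4
        then show ?thesis using A_eq[of a b] A_supp u_supp[OF 4] by simp
      qed (use A'c in simp_all)
    qed
    then obtain L d where "factors_on S A' L d" using insert.IH[OF A'psd] by blast
    from factors_on_insert[OF this insert.hyps(2) uc u_supp]
    have "factors_on (insert c S) (\<chi> a b. A'$a$b + u$a * u$b)
            (\<chi> a b. if b = c then u$a else L$a$b) (d(c := 1))" .
    moreover have "(\<chi> a b. A'$a$b + u$a * u$b) = A" using A_eq by (simp add: vec_eq_iff)
    ultimately show ?thesis by (intro exI) (simp only:)
  qed
qed

lemma psd_diag01_factor:
  fixes A :: "real^'n^'n"
  assumes "psd A"
  obtains L :: "real^'n^'n" and d where "invertible L" "\<And>l. d l = 0 \<or> d l = 1" "A = L ** diagm d ** transpose L"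
proof -
  obtain L d where fac: "factors_on UNIV A L d"
    using psd_factors_on[of UNIV A] assms by auto
  have d01: "\<And>l. d l = 0 \<or> d l = 1" using fac by (simp add: factors_on_def)
  have "\<exists>B. B ** L = mat 1" using fac unfolding factors_on_def matrix_left_invertible_ker by blast
  then have inv: "invertible L" by (simp add: invertible_left_inverse)
  have "A = L ** diagm d ** transpose L"
    using fac unfolding factors_on_def diag_factor_eq_mult[symmetric] by (simp add: vec_eq_iff)
  then show ?thesis by (rule that[OF inv d01])
qed

lemma psd_gram:
  fixes A :: "real^'n^'n"
  assumes "psd A"
  obtains W :: "real^'n^'n" where "A = W ** transpose W"
proof -
  obtain L :: "real^'n^'n" and d where d01: "\<And>l. d l = 0 \<or> d l = 1" and A: "A = L ** diagm d ** transpose L"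
    using psd_diag01_factor[OF assms] by blast
  have "(\<lambda>a. d a * d a) = d"
  proof
    fix a show "d a * d a = d a" using d01[of a] by auto
  qed
  then have idem: "diagm d ** diagm d = diagm d" by (simp add: diagm_mult)
  have "(L ** diagm d) ** transpose (L ** diagm d) = L ** (diagm d ** diagm d) ** transpose L"
    by (simp only: matrix_transpose_mul transpose_diagm matrix_mul_assoc)
  then have "A = (L ** diagm d) ** transpose (L ** diagm d)"
    by (simp only: A idem)
  then show ?thesis by (rule that)
qed

section \<open>Matrix algebra: sums, traces and Kronecker products\<close>

lemma matrix_add_rdistrib: "((A::real^'n^'m) + B) ** C = A ** C + B ** C"
  by (simp add: matrix_matrix_mult_def vec_eq_iff distrib_right sum.distrib)

lemma matrix_sum_left: "finite S \<Longrightarrow> (X::real^'n^'m) ** sum f S = (\<Sum>i\<in>S. X ** f i)"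
  by (induction S rule: finite_induct) (auto simp: matrix_add_ldistrib)

lemma matrix_sum_right: "finite S \<Longrightarrow> sum f S ** (X::real^'n^'m) = (\<Sum>i\<in>S. f i ** X)"
  by (induction S rule: finite_induct) (auto simp: matrix_add_rdistrib)

lemma trace_sum: "finite S \<Longrightarrow> trace (sum f S) = (\<Sum>i\<in>S. trace (f i :: real^'n^'n))"
  by (simp add: trace_def) (rule sum.swap)

lemma kron_sum_left: "kron (\<Sum>i\<in>I. F i) G = (\<Sum>i\<in>I. kron (F i) G)"
  by (simp add: kron_def vec_eq_iff sum_distrib_right)

lemma kron_sum_right: "kron F (\<Sum>j\<in>J. G j) = (\<Sum>j\<in>J. kron F (G j))"
  by (simp add: kron_def vec_eq_iff sum_distrib_left)

lemma kron_id: "kron (mat 1 :: real^'n^'n) (mat 1 :: real^'m^'m) = mat 1"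
  by (auto simp: kron_def mat_def vec_eq_iff prod_eq_iff)

lemma trace_eq_sum_kron:
  fixes F :: "'p::finite \<Rightarrow> real^'k^'k" and G :: "'q::finite \<Rightarrow> real^'l^'l"
  assumes "sum F UNIV = mat 1" "sum G UNIV = mat 1"
  shows "trace \<rho> = (\<Sum>i\<in>UNIV. \<Sum>j\<in>UNIV. trace (kron (F i) (G j) ** \<rho>))"
proof -
  have "trace \<rho> = trace (kron (sum F UNIV) (sum G UNIV) ** \<rho>)"
    by (simp add: assms kron_id)
  also have "\<dots> = (\<Sum>i\<in>UNIV. \<Sum>j\<in>UNIV. trace (kron (F i) (G j) ** \<rho>))"
    by (simp add: kron_sum_left kron_sum_right matrix_sum_right trace_sum) (rule sum.swap)
  finally show ?thesis .
qed

lemma sum_UNIV_pair: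
  "(\<Sum>r\<in>(UNIV::('a::finite \<times> 'b::finite) set). f r) = (\<Sum>a\<in>UNIV. \<Sum>b\<in>UNIV. f (a, b))"
  by (simp add: sum.cartesian_product)

lemma trace_kron_mult:
  "trace (kron F G ** R) = (\<Sum>a\<in>UNIV. \<Sum>b\<in>UNIV. \<Sum>c\<in>UNIV. \<Sum>e\<in>UNIV. F$a$c * G$b$e * R$(c,e)$(a,b))"
  by (simp add: trace_def matrix_matrix_mult_def kron_def sum_UNIV_pair)

lemma sum_rotate3:
  "(\<Sum>x\<in>X. \<Sum>y\<in>Y. \<Sum>z\<in>Z. f x y z) = (\<Sum>y\<in>Y. \<Sum>z\<in>Z. \<Sum>x\<in>X. f x y z)"
  by (subst sum.swap) (rule sum.cong[OF refl], rule sum.swap)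

lemma sum_rotate4:
  "(\<Sum>x\<in>X. \<Sum>y\<in>Y. \<Sum>z\<in>Z. \<Sum>w\<in>U. f x y z w) = (\<Sum>y\<in>Y. \<Sum>z\<in>Z. \<Sum>w\<in>U. \<Sum>x\<in>X. f x y z w)"
  by (subst sum.swap) (rule sum.cong[OF refl], rule sum_rotate3)

section \<open>Rank-one density matrices vec X (vec X)^T\<close>

definition vec_outer :: "real^'k^'k \<Rightarrow> real^('k::finite \<times> 'k)^('k \<times> 'k)" where
  "vec_outer X = (\<chi> r s. X$(fst r)$(snd r) * X$(fst s)$(snd s))"

lemma psd_vec_outer:
  fixes X :: "real^'k::finite^'k"
  shows "psd (vec_outer X)"
proof (rule psdI)
  fix i j show "vec_outer X$j$i = vec_outer X$i$j"
    by (simp add: vec_outer_def mult.commute)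
next
  fix x :: "real^('k \<times> 'k)"
  define v where "v r = X$(fst r)$(snd r)" for r
  have "(\<Sum>i\<in>UNIV. \<Sum>j\<in>UNIV. x$i * vec_outer X$i$j * x$j)
     = (\<Sum>i\<in>UNIV. x$i * v i) * (\<Sum>j\<in>UNIV. x$j * v j)"
    by (simp add: sum_product v_def vec_outer_def mult_ac)
  also have "\<dots> \<ge> 0" by simp
  finally show "0 \<le> (\<Sum>i\<in>UNIV. \<Sum>j\<in>UNIV. x$i * vec_outer X$i$j * x$j)" .
qed

lemma trace_kron_vec_outer:
  "trace (kron F G ** vec_outer X) = trace (transpose X ** F ** X ** transpose G)"
proof -
  have "trace (kron F G ** vec_outer X) =
    (\<Sum>a\<in>UNIV. \<Sum>b\<in>UNIV. \<Sum>c\<in>UNIV. \<Sum>e\<in>UNIV. F$a$c * G$b$e * (X$c$e * X$a$b))"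
    unfolding trace_kron_mult by (simp add: vec_outer_def)
  also have "\<dots> = (\<Sum>b\<in>UNIV. \<Sum>e\<in>UNIV. \<Sum>c\<in>UNIV. \<Sum>a\<in>UNIV. X$a$b * F$a$c * X$c$e * G$b$e)"
    by (subst sum_rotate4, rule sum.cong[OF refl], subst sum.swap, intro sum.cong[OF refl])
      (simp add: mult_ac)
  also have "\<dots> = trace (transpose X ** F ** X ** transpose G)"
    by (simp add: trace_def matrix_matrix_mult_def transpose_def sum_distrib_left sum_distrib_right mult_ac)
  finally show ?thesis .
qed

lemma psd_sum_vec_outer:
  fixes \<rho> :: "real^('k::finite \<times> 'k)^('k \<times> 'k)"
  assumes "psd \<rho>"
  obtains X :: "'k \<times> 'k \<Rightarrow> real^'k^'k" where "\<rho> = (\<Sum>l\<in>UNIV. vec_outer (X l))"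
proof -
  obtain W :: "real^('k \<times> 'k)^('k \<times> 'k)" where W: "\<rho> = W ** transpose W"
    using psd_gram[OF assms] by blast
  have "\<rho> = (\<Sum>l\<in>UNIV. vec_outer (\<chi> a b. W$(a,b)$l))"
    by (simp add: W vec_eq_iff vec_outer_def matrix_matrix_mult_def transpose_def)
  then show ?thesis by (rule that)
qed

lemma trace_kron_sum_vec_outer:
  fixes X :: "'l::finite \<Rightarrow> real^'k^'k"
  assumes "transpose G = G"
  shows "trace (kron F G ** (\<Sum>l\<in>UNIV. vec_outer (X l)))
       = frob_inner (\<Sum>l\<in>UNIV. transpose (X l) ** F ** X l) G"
proof -
  have "trace (kron F G ** (\<Sum>l\<in>UNIV. vec_outer (X l)))
      = (\<Sum>l\<in>UNIV. trace (kron F G ** vec_outer (X l)))"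
    by (simp add: matrix_sum_left trace_sum)
  also have "\<dots> = (\<Sum>l\<in>UNIV. trace (transpose (X l) ** F ** X l ** G))"
    by (simp add: trace_kron_vec_outer assms)
  also have "\<dots> = trace ((\<Sum>l\<in>UNIV. transpose (X l) ** F ** X l) ** G)"
    by (simp add: matrix_sum_right trace_sum)
  finally show ?thesis by (simp add: frob_inner_def)
qed

lemma frob_inner_congruence:
  fixes R1 R2 F G :: "real^'k^'k"
  assumes "transpose G = G"
  shows "frob_inner (R1 ** F ** transpose R1) (R2 ** G ** transpose R2)
       = trace (kron F G ** vec_outer (transpose R1 ** R2))"
proof -
  have "frob_inner (R1 ** F ** transpose R1) (R2 ** G ** transpose R2)
      = trace ((R1 ** F ** transpose R1 ** R2 ** G) ** transpose R2)"
    by (simp add: frob_inner_def matrix_mul_assoc)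
  also have "\<dots> = trace (transpose R2 ** (R1 ** F ** transpose R1 ** R2 ** G))"
    by (rule trace_mul_sym)
  also have "\<dots> = trace (transpose (transpose R1 ** R2) ** F ** (transpose R1 ** R2) ** G)"
    by (simp add: matrix_transpose_mul matrix_mul_assoc)
  also have "\<dots> = trace (kron F G ** vec_outer (transpose R1 ** R2))"
    by (simp add: trace_kron_vec_outer assms)
  finally show ?thesis .
qed

section \<open>Normalizing a family of psd matrices to a measurement\<close>

text \<open>If psd matrices C_i sum to a 0/1 diagonal matrix D, they vanish outside the support of D;
  padding them with (I - D)/p yields psd F_i summing to the identity with D F_i D = C_i.\<close>

lemma psd_pad_to_identity:
  fixes C :: "'p::finite \<Rightarrow> real^'k^'k"
  assumes psd: "\<And>i. psd (C i)" and d01: "\<And>a. d a = 0 \<or> d a = 1" and sumC: "sum C UNIV = diagm d"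
  obtains F where "\<And>i. psd (F i)" "sum F UNIV = mat 1" "\<And>i. diagm d ** F i ** diagm d = C i"
proof -
  have vanish: "C i$a$b = 0 \<and> C i$b$a = 0" if "d a = 0" for i a b
  proof -
    have "(\<Sum>j\<in>UNIV. C j$a$a) = 0"
      using arg_cong[OF sumC, of "\<lambda>M. M$a$a"] that by (simp add: diagm_def)
    then have "C i$a$a = 0"
      using sum_nonneg_eq_0_iff[of UNIV "\<lambda>j. C j$a$a"] psd_diag_nonneg[OF psd] by simp
    then show ?thesis using psd_diag_zero[OF psd] by blast
  qed
  define c where "c = real CARD('p)"
  have c_pos: "c > 0" unfolding c_def by simp
  define F where "F i = C i + diagm (\<lambda>a. (1 - d a) / c)" for i
  have "0 \<le> 1 - d a" for a using d01[of a] by auto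
  then have "psd (F i)" for i
    unfolding F_def by (intro psd_add psd psd_diagm divide_nonneg_pos c_pos)
  moreover have "sum F UNIV = mat 1"
  proof -
    have "(sum F UNIV)$a$b = (mat 1 :: real^'k^'k)$a$b" for a b
    proof -
      have "(sum F UNIV)$a$b = (\<Sum>i\<in>UNIV. C i$a$b + (if a = b then (1 - d a) / c else 0))"
        by (simp add: F_def diagm_def)
      also have "\<dots> = (\<Sum>i\<in>UNIV. C i$a$b) + c * (if a = b then (1 - d a) / c else 0)"
        by (simp only: sum.distrib sum_constant c_def)
      also have "(\<Sum>i\<in>UNIV. C i$a$b) = (if a = b then d a else 0)"
        using arg_cong[OF sumC, of "\<lambda>M. M$a$b"] by (simp add: diagm_def)
      finally show ?thesis using c_pos by (simp add: mat_def)
    qed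
    then show ?thesis by (simp add: vec_eq_iff)
  qed
  moreover have "diagm d ** F i ** diagm d = C i" for i
  proof -
    have "(diagm d ** F i ** diagm d)$a$b = C i$a$b" for a b
    proof -
      have "(diagm d ** F i ** diagm d)$a$b = d a * (C i$a$b + (if a = b then (1 - d a) / c else 0)) * d b"
        by (simp only: diagm_left diagm_right) (simp add: F_def diagm_def)
      also have "\<dots> = C i$a$b"
        using d01[of a] d01[of b] vanish[of a i b] vanish[of b i a] by auto
      finally show ?thesis .
    qed
    then show ?thesis by (simp add: vec_eq_iff)
  qed
  ultimately show ?thesis by (rule that)
qed

lemma psd_family_normal_form:
  fixes A :: "'p::finite \<Rightarrow> real^'k^'k"
  assumes psd: "\<And>i. psd (A i)"
  obtains R :: "real^'k^'k" and F :: "'p \<Rightarrow> real^'k^'k"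
  where "\<And>i. psd (F i)" "sum F UNIV = mat 1" "\<And>i. A i = R ** F i ** transpose R"
proof -
  have "psd (sum A UNIV)" using psd by (intro psd_sum) auto
  then obtain L :: "real^'k^'k" and d where inv: "invertible L" and d01: "\<And>a. d a = 0 \<or> d a = 1"
    and sumA: "sum A UNIV = L ** diagm d ** transpose L"
    using psd_diag01_factor by blast
  obtain T where TL: "T ** L = mat 1" and LT: "L ** T = mat 1"
    using inv unfolding invertible_def by blast
  have LT': "transpose L ** transpose T = mat 1" and TL': "transpose T ** transpose L = mat 1"
    using TL LT by (simp_all add: matrix_transpose_mul[symmetric])
  define C where "C i = T ** A i ** transpose T" for i
  have "sum C UNIV = T ** sum A UNIV ** transpose T"
    unfolding C_def by (simp add: matrix_sum_left matrix_sum_right)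
  also have "\<dots> = (T ** L) ** diagm d ** (transpose L ** transpose T)"
    unfolding sumA by (simp add: matrix_mul_assoc)
  finally have "sum C UNIV = diagm d" by (simp add: TL LT')
  moreover have "psd (C i)" for i unfolding C_def by (rule psd_congruence[OF psd])
  ultimately obtain F where psdF: "\<And>i. psd (F i)" and sumF: "sum F UNIV = mat 1"
    and DFD: "\<And>i. diagm d ** F i ** diagm d = C i"
    using psd_pad_to_identity d01 by metis
  have A_eq: "A i = (L ** diagm d) ** F i ** transpose (L ** diagm d)" for i
  proof -
    have "(L ** diagm d) ** F i ** transpose (L ** diagm d) = L ** (diagm d ** F i ** diagm d) ** transpose L"
      by (simp add: matrix_transpose_mul transpose_diagm matrix_mul_assoc)
    also have "\<dots> = (L ** T) ** A i ** (transpose T ** transpose L)"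
      by (simp add: DFD C_def matrix_mul_assoc)
    finally show ?thesis by (simp add: LT TL')
  qed
  show ?thesis by (rule that[OF psdF sumF A_eq])
qed

lemma psd_factorization_to_quantum:
  fixes A :: "'p::finite \<Rightarrow> real^'k^'k" and B :: "'q::finite \<Rightarrow> real^'k^'k"
  assumes "\<And>i. psd (A i)" and "\<And>j. psd (B j)"
  obtains F :: "'p \<Rightarrow> real^'k^'k" and G :: "'q \<Rightarrow> real^'k^'k" and \<rho> :: "real^('k \<times> 'k)^('k \<times> 'k)"
  where "\<And>i. psd (F i)" "sum F UNIV = mat 1" "\<And>j. psd (G j)" "sum G UNIV = mat 1" "psd \<rho>" "\<And>i j. frob_inner (A i) (B j) = trace (kron (F i) (G j) ** \<rho>)"
proof -
  obtain R1 :: "real^'k^'k" and F :: "'p \<Rightarrow> real^'k^'k" where F: "\<And>i. psd (F i)" "sum F UNIV = mat 1" and A: "\<And>i. A i = R1 ** F i ** transpose R1"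
    by (rule psd_family_normal_form[of A, OF assms(1)]) (rule that)
  obtain R2 :: "real^'k^'k" and G :: "'q \<Rightarrow> real^'k^'k" where G: "\<And>j. psd (G j)" "sum G UNIV = mat 1" and B: "\<And>j. B j = R2 ** G j ** transpose R2"
    by (rule psd_family_normal_form[of B, OF assms(2)]) (rule that)
  have "frob_inner (A i) (B j) = trace (kron (F i) (G j) ** vec_outer (transpose R1 ** R2))" for i j
    unfolding A B using G(1) by (intro frob_inner_congruence) (simp add: psd_def)
  then show ?thesis by (rule that[OF F G psd_vec_outer])
qed

lemma quantum_to_psd_factorization:
  fixes F :: "'p::finite \<Rightarrow> real^'k^'k" and G :: "'q::finite \<Rightarrow> real^'k^'k"
    and \<rho> :: "real^('k \<times> 'k)^('k \<times> 'k)"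
  assumes psdF: "\<And>i. psd (F i)" and psdG: "\<And>j. psd (G j)" and "psd \<rho>"
  obtains A where "\<And>i. psd (A i)" "\<And>i j. trace (kron (F i) (G j) ** \<rho>) = frob_inner (A i) (G j)"
proof -
  obtain X :: "'k \<times> 'k \<Rightarrow> real^'k^'k" where \<rho>: "\<rho> = (\<Sum>l\<in>UNIV. vec_outer (X l))"
    using psd_sum_vec_outer[OF \<open>psd \<rho>\<close>] by blast
  define A where "A i = (\<Sum>l\<in>UNIV. transpose (X l) ** F i ** X l)" for i
  have "psd (A i)" for i
    unfolding A_def using psd_congruence[OF psdF, of "transpose (X _)"] by (intro psd_sum) auto
  moreover have "trace (kron (F i) (G j) ** \<rho>) = frob_inner (A i) (G j)" for i j
    unfolding \<rho> A_def using psdG[of j] by (intro trace_kron_sum_vec_outer) (simp add: psd_def)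
  ultimately show ?thesis by (rule that)
qed

theorem proposition3p7:
  fixes M :: "real^'q^'p" and k_type :: "'k::finite itself"
  assumes nonneg: "\<forall>i j. 0 \<le> M $ i $ j"
    and sum1: "(\<Sum>i\<in>UNIV. \<Sum>j\<in>UNIV. M $ i $ j) = 1"
  shows "(\<exists>(A :: 'p \<Rightarrow> real^'k^'k) (B :: 'q \<Rightarrow> real^'k^'k).
            (\<forall>i. psd (A i)) \<and> (\<forall>j. psd (B j)) \<and>
            (\<forall>i j. M $ i $ j = frob_inner (A i) (B j)))
     \<longleftrightarrow>
         (\<exists>(F :: 'p \<Rightarrow> real^'k^'k) (G :: 'q \<Rightarrow> real^'k^'k) (\<rho> :: real^('k \<times> 'k)^('k \<times> 'k)).
            (\<forall>i. psd (F i)) \<and> (\<Sum>i\<in>UNIV. F i) = mat 1 \<and>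
            (\<forall>j. psd (G j)) \<and> (\<Sum>j\<in>UNIV. G j) = mat 1 \<and>
            psd \<rho> \<and> trace \<rho> = 1 \<and>
            (\<forall>i j. M $ i $ j = trace (kron (F i) (G j) ** \<rho>)))"
  (is "?factorization \<longleftrightarrow> ?quantum")
proof
  assume ?factorization
  then obtain A :: "'p \<Rightarrow> real^'k^'k" and B :: "'q \<Rightarrow> real^'k^'k"
    where psdA: "\<And>i. psd (A i)" and psdB: "\<And>j. psd (B j)"
      and M: "\<And>i j. M $ i $ j = frob_inner (A i) (B j)"
    by blast
  obtain F :: "'p \<Rightarrow> real^'k^'k" and G :: "'q \<Rightarrow> real^'k^'k" and \<rho> :: "real^('k \<times> 'k)^('k \<times> 'k)"
    where FG: "\<And>i. psd (F i)" "sum F UNIV = mat 1" "\<And>j. psd (G j)" "sum G UNIV = mat 1"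
    and "psd \<rho>" and AB: "\<And>i j. frob_inner (A i) (B j) = trace (kron (F i) (G j) ** \<rho>)"
    by (rule psd_factorization_to_quantum[of A B, OF psdA psdB]) (rule that)
  have "trace \<rho> = 1"
    using trace_eq_sum_kron[OF FG(2,4), of \<rho>] sum1 by (simp add: M AB)
  with FG \<open>psd \<rho>\<close> M AB show ?quantum by auto
next
  assume ?quantum
  then obtain F :: "'p \<Rightarrow> real^'k^'k" and G :: "'q \<Rightarrow> real^'k^'k" and \<rho> :: "real^('k \<times> 'k)^('k \<times> 'k)"
    where psdF: "\<And>i. psd (F i)" and psdG: "\<And>j. psd (G j)" and "psd \<rho>"
      and M: "\<And>i j. M $ i $ j = trace (kron (F i) (G j) ** \<rho>)"
    by blast
  obtain A where "\<And>i. psd (A i)" "\<And>i j. trace (kron (F i) (G j) ** \<rho>) = frob_inner (A i) (G j)"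
    by (rule quantum_to_psd_factorization[of F G, OF psdF psdG \<open>psd \<rho>\<close>]) (rule that)
  with psdG M show ?factorization by auto
qed

end
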